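(* Let $k\in\{2,3\}$, let $C$ and $C'$ be configurations of g-$k$PATH, let $v\in C$, and let $t\ge0$ be an integer with $\mathrm{d}_C(\mathbf{0},v)\le t$. Then $C\equiv'_{t,v}C'$ if and only if $C'$ is a consistent extension of the subset $M(v,t,C)$ of $C$.
   Context: Positions are elements of $\mathbb{Z}^k$; $\mathbf 0$ is the origin. Let $\epsilon_0,\dots,\epsilon_{2k-1}$ be the $2k$ vectors $\pm e_1,\dots,\pm e_k$ (unit coordinate vectors and their negatives) in a fixed order; positions $p,p'$ are adjacent if $p'-p$ is one of them. A configuration of g-$k$PATH is a sequence $p_r p_{r+1}\dots p_s$ ($r\le0\le s$) of positions with $p_0=\mathbf 0$, $p_l$ and $p_{l+1}$ adjacent for all $r\le l<s$, all $p_l$ distinct, and $p_l,p_m$ not adjacent whenever $|l-m|\ge2$; it is identified with its set of positions. For a configuration $C$ and $p,p'\in C$, $\mathrm{d}_C(p,p')$ is the number of steps of a shortest path from $p$ to $p'$ inside $C$ (consecutive positions adjacent). For $p\in C$, $\mathrm{bc}_C(p)=(b_0,\dots,b_{2k-1})\in\{0,1\}^{2k}$ with $b_i=1$ iff $p+\epsilon_i\in C$. $\mathrm{ai}(v,t,C)$ is the symbol $\mathrm{Q}$ if $\mathrm{d}_C(\mathbf 0,v)>t$, and otherwise the triple $(t,v,\{(v',\mathrm{bc}_C(v')) : v'\in C,\ \mathrm{d}_C(\mathbf 0,v')+\mathrm{d}_C(v',v)\le t\})$. $C\equiv'_{t,v}C'$ means $v\in C\cap C'$ and $\mathrm{ai}(v,t,C)=\mathrm{ai}(v,t,C')\neq\mathrm{Q}$.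 $M(v,t,C)=\{v'\in C:\mathrm{d}_C(\mathbf 0,v')+\mathrm{d}_C(v',v)\le t\}$. $C'$ is a consistent extension of a subset $M$ of $C$ if $M\subseteq C'$ and $\mathrm{bc}_C(w)=\mathrm{bc}_{C'}(w)$ for all $w\in M$. *)

theory Defs
  imports Main
begin

text \<open>Positions of g-kPATH: elements of Z^k, represented as integer lists of length k.\<close>

definition pos :: "nat \<Rightarrow> int list \<Rightarrow> bool" where
  "pos k p \<longleftrightarrow> length p = k"

definition origin :: "nat \<Rightarrow> int list" where
  "origin k = replicate k 0"

text \<open>Fixed order of the 2k unit vectors: eps 0..eps (k-1) = e_1..e_k,
  eps k..eps (2k-1) = -e_1..-e_k.\<close>
definition eps :: "nat \<Rightarrow> nat \<Rightarrow> int list" where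
  "eps k i = (if i < k then map (\<lambda>j. if j = i then 1 else 0) [0..<k]
              else map (\<lambda>j. if j = i - k then -1 else 0) [0..<k])"

definition vadd :: "int list \<Rightarrow> int list \<Rightarrow> int list" where
  "vadd p q = map2 (+) p q"

definition adj :: "nat \<Rightarrow> int list \<Rightarrow> int list \<Rightarrow> bool" where
  "adj k p p' \<longleftrightarrow> pos k p \<and> pos k p' \<and> (\<exists>i<2*k. p' = vadd p (eps k i))"

text \<open>A configuration: the set of positions of a sequence p_r..p_s (r <= 0 <= s)
  with p_0 the origin, consecutive positions adjacent, all distinct, and
  non-consecutive positions non-adjacent.  The list ps is p_r..p_s; the origin
  occurs somewhere in it.\<close>
definition gconfig :: "nat \<Rightarrow> int list set \<Rightarrow> bool" where
  "gconfig k C \<longleftrightarrow> (\<exists>ps. ps \<noteq> [] \<and> origin k \<in> set ps \<and> (\<forall>p\<in>set ps. pos k p) \<and>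
     distinct ps \<and>
     (\<forall>l. Suc l < length ps \<longrightarrow> adj k (ps ! l) (ps ! Suc l)) \<and>
     (\<forall>l m. l < length ps \<and> m < length ps \<and> l + 2 \<le> m \<longrightarrow> \<not> adj k (ps ! l) (ps ! m)) \<and>
     C = set ps)"

definition walk_in :: "nat \<Rightarrow> int list set \<Rightarrow> int list \<Rightarrow> int list \<Rightarrow> nat \<Rightarrow> bool" where
  "walk_in k C p p' n \<longleftrightarrow> (\<exists>xs. length xs = Suc n \<and> hd xs = p \<and> last xs = p' \<and> set xs \<subseteq> C \<and>
      (\<forall>i<n. adj k (xs ! i) (xs ! Suc i)))"

definition dC :: "nat \<Rightarrow> int list set \<Rightarrow> int list \<Rightarrow> int list \<Rightarrow> nat" where
  "dC k C p p' = (LEAST n. walk_in k C p p' n)"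

definition bc :: "nat \<Rightarrow> int list set \<Rightarrow> int list \<Rightarrow> bool list" where
  "bc k C p = map (\<lambda>i. vadd p (eps k i) \<in> C) [0..<2*k]"

datatype ai_val = Q | AI nat "int list" "(int list \<times> bool list) set"

definition ai :: "nat \<Rightarrow> int list \<Rightarrow> nat \<Rightarrow> int list set \<Rightarrow> ai_val" where
  "ai k v t C = (if dC k C (origin k) v > t then Q
     else AI t v {(v', bc k C v') | v'. v' \<in> C \<and> dC k C (origin k) v' + dC k C v' v \<le> t})"

definition equiv' :: "nat \<Rightarrow> nat \<Rightarrow> int list \<Rightarrow> int list set \<Rightarrow> int list set \<Rightarrow> bool" where
  "equiv' k t v C C' \<longleftrightarrow> v \<in> C \<and> v \<in> C' \<and> ai k v t C = ai k v t C' \<and> ai k v t C \<noteq> Q"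

definition Mset :: "nat \<Rightarrow> int list \<Rightarrow> nat \<Rightarrow> int list set \<Rightarrow> int list set" where
  "Mset k v t C = {v' \<in> C. dC k C (origin k) v' + dC k C v' v \<le> t}"

definition consistent_ext :: "nat \<Rightarrow> int list set \<Rightarrow> int list set \<Rightarrow> int list set \<Rightarrow> bool" where
  "consistent_ext k M C C' \<longleftrightarrow> M \<subseteq> C' \<and> (\<forall>w\<in>M. bc k C w = bc k C' w)"

end

theory Submission
  imports Defs
begin

text \<open>On a configuration, which is an induced path of the grid, the distance \<open>d\<^sub>C\<close> is the
  difference of indices along the path. Hence \<open>M(v,t,C)\<close> is a contiguous segment of the path
  containing the origin and \<open>v\<close>. If \<open>C'\<close> is a consistent extension of it, the segment reappears
  contiguously in \<open>C'\<close>, because adjacency is a property of positions, not of the configuration;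
  so detour lengths \<open>d(0,w) + d(w,v)\<close> inside the segment agree in \<open>C\<close> and \<open>C'\<close>. The neighbour bits
  on \<open>M\<close> force the first position of \<open>C'\<close> leaving the segment to be a position of \<open>C\<close> outside
  \<open>M\<close>, whose detour already exceeds \<open>t\<close>. Hence \<open>M(v,t,C') = M(v,t,C)\<close>, and together with the
  agreement of the neighbour bits this gives \<open>ai(v,t,C') = ai(v,t,C)\<close>.\<close>

lemma length_eps [simp]: "length (eps k i) = k"
  by (simp add: eps_def)

lemma nth_eps:
  "j < k \<Longrightarrow> eps k i ! j = (if i < k then (if j = i then 1 else 0) else (if j = i - k then -1 else 0))"
  by (simp add: eps_def)

lemma length_vadd [simp]: "length (vadd p q) = min (length p) (length q)"
  by (simp add: vadd_def)

lemma nth_vadd: "j < length p \<Longrightarrow> j < length q \<Longrightarrow> vadd p q ! j = p ! j + q ! j"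
  by (simp add: vadd_def)

lemma adj_sym:
  assumes "adj k p q"
  shows "adj k q p"
proof -
  from assms obtain i where i: "i < 2 * k" "q = vadd p (eps k i)" and pq: "pos k p" "pos k q"
    unfolding adj_def by blast
  define i' where "i' = (if i < k then i + k else i - k)"
  have "i' < 2 * k"
    using i(1) by (auto simp: i'_def)
  moreover have "p = vadd q (eps k i')"
    using pq i by (intro nth_equalityI) (auto simp: pos_def nth_vadd nth_eps i'_def)
  ultimately show ?thesis
    using pq unfolding adj_def by blast
qed

lemma adj_irrefl: "\<not> adj k p p"
proof
  assume "adj k p p"
  then obtain i where i: "i < 2 * k" "p = vadd p (eps k i)" and "pos k p"
    unfolding adj_def by blast
  define j where "j = (if i < k then i else i - k)"
  have j: "j < k"
    using i(1) by (auto simp: j_def)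
  have "p ! j = p ! j + eps k i ! j"
    using j \<open>pos k p\<close> by (subst (1) i(2)) (simp add: nth_vadd pos_def)
  then show False
    using j by (simp add: nth_eps j_def split: if_splits)
qed

definition induced_path :: "nat \<Rightarrow> int list list \<Rightarrow> bool" where
  "induced_path k ps \<longleftrightarrow> distinct ps \<and>
     (\<forall>l. Suc l < length ps \<longrightarrow> adj k (ps ! l) (ps ! Suc l)) \<and>
     (\<forall>l m. l < length ps \<and> m < length ps \<and> l + 2 \<le> m \<longrightarrow> \<not> adj k (ps ! l) (ps ! m))"

lemma gconfig_imp_induced_path:
  "gconfig k C \<Longrightarrow> \<exists>ps. induced_path k ps \<and> origin k \<in> set ps \<and> C = set ps"
  unfolding gconfig_def induced_path_def by blast

lemma induced_path_distinct: "induced_path k ps \<Longrightarrow> distinct ps"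
  by (simp add: induced_path_def)

lemma induced_path_adj_iff:
  assumes "induced_path k ps" "l < length ps" "m < length ps"
  shows "adj k (ps ! l) (ps ! m) \<longleftrightarrow> m = Suc l \<or> l = Suc m"
proof
  assume a: "adj k (ps ! l) (ps ! m)"
  have "l \<noteq> m"
    using a adj_irrefl by blast
  moreover have "\<not> l + 2 \<le> m" "\<not> m + 2 \<le> l"
    using a adj_sym[OF a] assms unfolding induced_path_def by blast+
  ultimately show "m = Suc l \<or> l = Suc m"
    by linarith
next
  assume "m = Suc l \<or> l = Suc m"
  then show "adj k (ps ! l) (ps ! m)"
    using assms adj_sym unfolding induced_path_def by blast
qed

lemma induced_path_rev:
  assumes "induced_path k ps"
  shows "induced_path k (rev ps)"
  unfolding induced_path_def
proof (intro conjI allI impI)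
  show "distinct (rev ps)"
    using assms by (simp add: induced_path_def)
next
  fix l assume "Suc l < length (rev ps)"
  then show "adj k (rev ps ! l) (rev ps ! Suc l)"
    using induced_path_adj_iff[OF assms, of "length ps - Suc l" "length ps - Suc (Suc l)"]
    by (simp add: rev_nth Suc_diff_Suc)
next
  fix l m assume lm: "l < length (rev ps) \<and> m < length (rev ps) \<and> l + 2 \<le> m"
  then have "\<not> adj k (ps ! (length ps - Suc l)) (ps ! (length ps - Suc m))"
    by (subst induced_path_adj_iff[OF assms]) auto
  then show "\<not> adj k (rev ps ! l) (rev ps ! m)"
    using lm by (simp add: rev_nth)
qed

definition idist :: "nat \<Rightarrow> nat \<Rightarrow> nat" where
  "idist i j = (if i \<le> j then j - i else i - j)"

lemma walk_in_induced_path_length_ge: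
  assumes ps: "induced_path k ps" and "i < length ps" "j < length ps"
    and "walk_in k (set ps) (ps ! i) (ps ! j) n"
  shows "idist i j \<le> n"
proof -
  from assms(4) obtain xs where xs: "length xs = Suc n" "hd xs = ps ! i" "last xs = ps ! j"
    "set xs \<subseteq> set ps" "\<forall>r<n. adj k (xs ! r) (xs ! Suc r)"
    unfolding walk_in_def by blast
  \<comment> \<open>each step of the walk moves one index along \<open>ps\<close>\<close>
  have "\<exists>m<length ps. xs ! r = ps ! m \<and> idist i m \<le> r" if "r \<le> n" for r
    using that
  proof (induction r)
    case 0
    have "xs ! 0 = ps ! i"
      using xs(1,2) by (cases xs) auto
    then show ?case
      using assms(2) by (auto simp: idist_def)
  next
    case (Suc r)
    then obtain m where m: "m < length ps" "xs ! r = ps ! m" "idist i m \<le> r"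
      by auto
    have "xs ! Suc r \<in> set ps"
      using xs(1,4) Suc.prems by (simp add: subset_code(1))
    then obtain m' where m': "m' < length ps" "xs ! Suc r = ps ! m'"
      by (metis in_set_conv_nth)
    have "adj k (ps ! m) (ps ! m')"
      using xs(5) m(2) m'(2) Suc.prems by (metis Suc_le_lessD)
    then have "m' = Suc m \<or> m = Suc m'"
      using induced_path_adj_iff[OF ps m(1) m'(1)] by blast
    then have "idist i m' \<le> Suc r"
      using m(3) by (auto simp: idist_def split: if_splits)
    then show ?case
      using m' by blast
  qed
  then obtain m where m: "m < length ps" "xs ! n = ps ! m" "idist i m \<le> n"
    by blast
  have "xs ! n = ps ! j"
    using xs(1,3) last_conv_nth[of xs] by (cases xs) auto
  then have "m = j"
    using m(1,2) assms(3) induced_path_distinct[OF ps] by (simp add: nth_eq_iff_index_eq)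
  then show ?thesis
    using m(3) by simp
qed

lemma walk_in_induced_path:
  assumes ps: "induced_path k ps" and "i < length ps" "j < length ps"
  shows "walk_in k (set ps) (ps ! i) (ps ! j) (idist i j)"
proof -
  define f where "f r = (if i \<le> j then i + r else i - r)" for r
  define xs where "xs = map (\<lambda>r. ps ! f r) [0..<Suc (idist i j)]"
  have f_less: "r \<le> idist i j \<Longrightarrow> f r < length ps" for r
    using assms(2,3) by (auto simp: f_def idist_def)
  have "\<forall>r<idist i j. adj k (xs ! r) (xs ! Suc r)"
  proof (intro allI impI)
    fix r assume r: "r < idist i j"
    have "f (Suc r) = Suc (f r) \<or> f r = Suc (f (Suc r))"
      using r by (auto simp: f_def idist_def)
    then show "adj k (xs ! r) (xs ! Suc r)"
      using induced_path_adj_iff[OF ps f_less f_less] r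
      by (simp add: xs_def nth_map del: upt_Suc)
  qed
  moreover have "hd xs = ps ! i" "last xs = ps ! j"
    by (simp_all add: xs_def f_def idist_def hd_map last_map del: upt_Suc)
  moreover have "set xs \<subseteq> set ps"
    using f_less by (auto simp: xs_def)
  ultimately show ?thesis
    unfolding walk_in_def by (intro exI[of _ xs]) (simp add: xs_def)
qed

lemma dC_induced_path:
  assumes "induced_path k ps" "i < length ps" "j < length ps"
  shows "dC k (set ps) (ps ! i) (ps ! j) = idist i j"
  unfolding dC_def
  using walk_in_induced_path[OF assms] walk_in_induced_path_length_ge[OF assms]
  by (intro Least_equality) auto

lemma induced_path_segment_continue:
  assumes ps: "induced_path k ps" and qs: "induced_path k qs"
    and "a + L < length ps" "\<forall>r\<le>L. ps ! (a + r) \<in> set qs" "0 < L"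
    and "c + 1 < length qs" "qs ! c = ps ! a" "qs ! (c + 1) = ps ! (a + 1)"
  shows "\<forall>r\<le>L. c + r < length qs \<and> qs ! (c + r) = ps ! (a + r)"
proof -
  have segment: "c + Suc r < length qs \<and> qs ! (c + r) = ps ! (a + r) \<and> qs ! (c + Suc r) = ps ! (a + Suc r)"
    if "Suc r \<le> L" for r
    using that
  proof (induction r)
    case 0
    then show ?case
      using assms(6-8) by simp
  next
    case (Suc r)
    then have IH: "c + Suc r < length qs" "qs ! (c + Suc r) = ps ! (a + Suc r)"
      by simp_all
    obtain m where m: "m < length qs" "qs ! m = ps ! (a + Suc (Suc r))"
      using assms(4) Suc.prems by (metis in_set_conv_nth)
    have "adj k (ps ! (a + Suc r)) (ps ! (a + Suc (Suc r)))"
      using induced_path_adj_iff[OF ps] assms(3) Suc.prems by simp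
    then have "m = Suc (c + Suc r) \<or> c + Suc r = Suc m"
      using induced_path_adj_iff[OF qs IH(1) m(1)] IH(2) m(2) by simp
    moreover have "ps ! (a + r) \<noteq> ps ! (a + Suc (Suc r))"
      using induced_path_distinct[OF ps] assms(3) Suc.prems by (simp add: nth_eq_iff_index_eq)
    then have "m \<noteq> c + r"
      using Suc.IH Suc.prems m(2) by auto
    ultimately have "m = c + Suc (Suc r)"
      by linarith
    then show ?case
      using m IH by simp
  qed
  show ?thesis
  proof (intro allI impI)
    fix r assume "r \<le> L"
    then show "c + r < length qs \<and> qs ! (c + r) = ps ! (a + r)"
      using segment assms(6,7) by (cases r) auto
  qed
qed

lemma induced_path_contains_segment:
  assumes ps: "induced_path k ps" and qs: "induced_path k qs"
    and aL: "a + L < length ps" and sub: "\<forall>r\<le>L. ps ! (a + r) \<in> set qs"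
  obtains Q c where "induced_path k Q" "set Q = set qs"
    "\<forall>r\<le>L. c + r < length Q \<and> Q ! (c + r) = ps ! (a + r)"
proof -
  obtain c0 where c0: "c0 < length qs" "qs ! c0 = ps ! a"
    using sub by (metis add_0_right in_set_conv_nth le0)
  show ?thesis
  proof (cases "L = 0")
    case True
    then show ?thesis
      using that[OF qs refl, of c0] c0 by simp
  next
    case False
    obtain c1 where c1: "c1 < length qs" "qs ! c1 = ps ! (a + 1)"
      using sub False by (metis in_set_conv_nth less_one linorder_not_less)
    have "adj k (ps ! a) (ps ! (a + 1))"
      using induced_path_adj_iff[OF ps, of a "Suc a"] aL False by simp
    then have "c1 = Suc c0 \<or> c0 = Suc c1"
      using induced_path_adj_iff[OF qs c0(1) c1(1)] c0(2) c1(2) by simp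
    then show ?thesis
    proof
      assume "c1 = Suc c0"
      then have "\<forall>r\<le>L. c0 + r < length qs \<and> qs ! (c0 + r) = ps ! (a + r)"
        using False c0 c1 by (intro induced_path_segment_continue[OF ps qs aL sub]) simp_all
      then show ?thesis
        using that[OF qs refl] by blast
    next
      assume c10: "c0 = Suc c1"
      define c where "c = length qs - Suc c0"
      have "c + 1 < length (rev qs)" "rev qs ! c = ps ! a" "rev qs ! (c + 1) = ps ! (a + 1)"
        using c0 c1 c10 by (auto simp: c_def rev_nth Suc_diff_Suc)
      then have "\<forall>r\<le>L. c + r < length (rev qs) \<and> rev qs ! (c + r) = ps ! (a + r)"
        using sub False by (intro induced_path_segment_continue[OF ps induced_path_rev[OF qs] aL]) simp_all
      then show ?thesis
        using that[OF induced_path_rev[OF qs]] by simp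
    qed
  qed
qed

definition detour :: "nat \<Rightarrow> nat \<Rightarrow> nat \<Rightarrow> nat" where
  "detour x y j = idist x j + idist j y"

lemma detour_shift [simp]: "detour (c + x) (c + y) (c + j) = detour x y j"
  by (simp add: detour_def idist_def)

lemma detour_step: "idist e j = 1 \<Longrightarrow> detour x y j \<le> detour x y e + 2"
  by (auto simp: detour_def idist_def split: if_splits)

lemma detour_le_iff:
  assumes "idist x y \<le> t"
  shows "detour x y j \<le> t \<longleftrightarrow>
    min x y - (t - idist x y) div 2 \<le> j \<and> j \<le> max x y + (t - idist x y) div 2"
  using assms unfolding detour_def idist_def by (auto split: if_splits)

lemma detour_le_interval:
  assumes "x < n" "y < n" "idist x y \<le> t"
  obtains a L where "a + L < n" "a \<le> x" "x \<le> a + L" "a \<le> y" "y \<le> a + L"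
    "\<forall>j<n. detour x y j \<le> t \<longleftrightarrow> a \<le> j \<and> j \<le> a + L"
proof -
  define s where "s = (t - idist x y) div 2"
  define a where "a = min x y - s"
  define b where "b = min (n - 1) (max x y + s)"
  show ?thesis
  proof (rule that[of a "b - a"])
    have "a \<le> b"
      using assms by (auto simp: a_def b_def min_def max_def)
    then show "\<forall>j<n. detour x y j \<le> t \<longleftrightarrow> a \<le> j \<and> j \<le> a + (b - a)"
      unfolding detour_le_iff[OF assms(3)] s_def[symmetric] a_def[symmetric] b_def by auto
  qed (use assms in \<open>auto simp: a_def b_def\<close>)
qed

lemma detour_exit:
  assumes "p \<le> x" "x \<le> q" "p \<le> y" "y \<le> q" "\<not> (p \<le> m \<and> m \<le> q)"
  obtains e m' where "p \<le> e" "e \<le> q" "\<not> (p \<le> m' \<and> m' \<le> q)" "idist e m' = 1"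
    "m' \<le> max q m" "detour x y e + 2 \<le> detour x y m"
proof (cases "m < p")
  case True
  then show ?thesis
    using assms by (intro that[of p "p - 1"]) (auto simp: detour_def idist_def)
next
  case False
  then show ?thesis
    using assms by (intro that[of q "Suc q"]) (auto simp: detour_def idist_def)
qed

lemma Mset_induced_path:
  assumes "induced_path k ps" "i0 < length ps" "iv < length ps"
    and "ps ! i0 = origin k" "ps ! iv = v"
  shows "Mset k v t (set ps) = (\<lambda>j. ps ! j) ` {j. j < length ps \<and> detour i0 iv j \<le> t}"
proof -
  have "dC k (set ps) (origin k) (ps ! j) + dC k (set ps) (ps ! j) v = detour i0 iv j"
    if "j < length ps" for j
    unfolding detour_def assms(4,5)[symmetric] using dC_induced_path[OF assms(1)] that assms(2,3)
    by simp
  then show ?thesis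
    unfolding Mset_def by (auto simp: in_set_conv_nth)
qed

lemma nth_bc: "i < 2 * k \<Longrightarrow> bc k C w ! i \<longleftrightarrow> vadd w (eps k i) \<in> C"
  by (simp add: bc_def)

lemma consistent_ext_adj_closed:
  assumes "consistent_ext k M C C'" "w \<in> M" "adj k w u" "u \<in> C'"
  shows "u \<in> C"
proof -
  obtain i where "i < 2 * k" "u = vadd w (eps k i)"
    using assms(3) unfolding adj_def by blast
  moreover have "bc k C w = bc k C' w"
    using assms(1,2) unfolding consistent_ext_def by blast
  ultimately show ?thesis
    using assms(4) by (metis nth_bc)
qed

lemma embedded_segment_exit:
  assumes ps: "induced_path k ps" and qs: "induced_path k qs"
    and aL: "a + L < length ps" and seg: "\<forall>r\<le>L. c + r < length qs \<and> qs ! (c + r) = ps ! (a + r)"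
    and closed: "\<forall>r\<le>L. \<forall>u\<in>set qs. adj k (ps ! (a + r)) u \<longrightarrow> u \<in> set ps"
    and "r \<le> L" "m < length qs" "idist (c + r) m = 1" "\<not> (c \<le> m \<and> m \<le> c + L)"
  obtains j where "j < length ps" "idist (a + r) j = 1" "\<not> (a \<le> j \<and> j \<le> a + L)"
proof -
  have "c + r < length qs"
    using seg \<open>r \<le> L\<close> by simp
  then have "adj k (qs ! (c + r)) (qs ! m)"
    using induced_path_adj_iff[OF qs _ \<open>m < length qs\<close>] \<open>idist (c + r) m = 1\<close>
    by (auto simp: idist_def split: if_splits)
  then have adj_r: "adj k (ps ! (a + r)) (qs ! m)"
    using seg \<open>r \<le> L\<close> by simp
  then obtain j where j: "j < length ps" "qs ! m = ps ! j"
    using closed \<open>r \<le> L\<close> \<open>m < length qs\<close> by (metis in_set_conv_nth nth_mem)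
  have "a + r < length ps"
    using aL \<open>r \<le> L\<close> by linarith
  then have "j = Suc (a + r) \<or> a + r = Suc j"
    using induced_path_adj_iff[OF ps _ j(1)] adj_r j(2) by simp
  then have "idist (a + r) j = 1"
    by (auto simp: idist_def)
  moreover have "\<not> (a \<le> j \<and> j \<le> a + L)"
  proof
    assume "a \<le> j \<and> j \<le> a + L"
    then have "qs ! m = qs ! (c + (j - a))" "c + (j - a) < length qs"
      using seg[rule_format, of "j - a"] j(2) by auto
    then have "m = c + (j - a)"
      using \<open>m < length qs\<close> induced_path_distinct[OF qs] by (simp add: nth_eq_iff_index_eq)
    then show False
      using \<open>\<not> (c \<le> m \<and> m \<le> c + L)\<close> \<open>a \<le> j \<and> j \<le> a + L\<close> by linarith
  qed
  ultimately show ?thesis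
    using that j(1) by blast
qed

text \<open>Leaving the embedded segment of \<open>qs\<close> means stepping to a position of \<open>ps\<close> just outside
  the segment, whose detour in \<open>ps\<close> already exceeds \<open>t\<close>; further out, detours only grow.\<close>

lemma embedded_segment_detour_le_iff:
  assumes ps: "induced_path k ps" and qs: "induced_path k qs"
    and aL: "a + L < length ps" and seg: "\<forall>r\<le>L. c + r < length qs \<and> qs ! (c + r) = ps ! (a + r)"
    and "r0 \<le> L" "rv \<le> L"
    and interval: "\<forall>j<length ps. detour (a + r0) (a + rv) j \<le> t \<longleftrightarrow> a \<le> j \<and> j \<le> a + L"
    and closed: "\<forall>r\<le>L. \<forall>u\<in>set qs. adj k (ps ! (a + r)) u \<longrightarrow> u \<in> set ps"
    and m: "m < length qs"
  shows "detour (c + r0) (c + rv) m \<le> t \<longleftrightarrow> c \<le> m \<and> m \<le> c + L"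
proof (cases "c \<le> m \<and> m \<le> c + L")
  case True
  then have "detour (c + r0) (c + rv) m = detour (a + r0) (a + rv) (a + (m - c))"
    by (metis detour_shift le_add_diff_inverse)
  moreover have "a + (m - c) < length ps" "a \<le> a + (m - c)" "a + (m - c) \<le> a + L"
    using True aL by linarith+
  ultimately show ?thesis
    using True interval by simp
next
  case False
  obtain e m' where e: "c \<le> e" "e \<le> c + L" and m': "\<not> (c \<le> m' \<and> m' \<le> c + L)"
    and "idist e m' = 1" "m' \<le> max (c + L) m"
    and exit: "detour (c + r0) (c + rv) e + 2 \<le> detour (c + r0) (c + rv) m"
    by (rule detour_exit[of c "c + r0" "c + L" "c + rv" m]) (use assms(5,6) False in auto)
  define r where "r = e - c"
  have r: "r \<le> L" "e = c + r"
    using e by (simp_all add: r_def)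
  have "m' < length qs"
    using seg r m \<open>m' \<le> max (c + L) m\<close> by auto
  then obtain j where j: "j < length ps" "idist (a + r) j = 1" "\<not> (a \<le> j \<and> j \<le> a + L)"
    using embedded_segment_exit[OF ps qs aL seg closed r(1)] \<open>idist e m' = 1\<close> m' r(2) by blast
  then have "t < detour (a + r0) (a + rv) j"
    using interval by auto
  also have "\<dots> \<le> detour (a + r0) (a + rv) (a + r) + 2"
    using j(2) by (rule detour_step)
  also have "\<dots> = detour (c + r0) (c + rv) e + 2"
    using r(2) by simp
  finally show ?thesis
    using exit False by linarith
qed

lemma image_atLeastAtMost_shift: "f ` {c..c + L} = (\<lambda>r. f (c + r)) ` {..L :: nat}"
proof -
  have "{c..c + L} = (+) c ` {0..L}"
    by (simp add: add.commute)
  then show ?thesis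
    by (simp add: image_image atLeast0AtMost)
qed

lemma Mset_eq_if_consistent_ext:
  assumes ps: "induced_path k ps" and qs: "induced_path k qs"
    and "origin k \<in> set ps" "v \<in> set ps" "dC k (set ps) (origin k) v \<le> t"
    and ext: "consistent_ext k (Mset k v t (set ps)) (set ps) (set qs)"
  shows "Mset k v t (set qs) = Mset k v t (set ps)"
proof -
  obtain i0 iv where i0: "i0 < length ps" "ps ! i0 = origin k" and iv: "iv < length ps" "ps ! iv = v"
    using assms(3,4) by (metis in_set_conv_nth)
  have "idist i0 iv \<le> t"
    using assms(5) dC_induced_path[OF ps i0(1) iv(1)] i0(2) iv(2) by simp
  then obtain a L where aL: "a + L < length ps" "a \<le> i0" "i0 \<le> a + L" "a \<le> iv" "iv \<le> a + L"
    and interval: "\<forall>j<length ps. detour i0 iv j \<le> t \<longleftrightarrow> a \<le> j \<and> j \<le> a + L"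
    using detour_le_interval[OF i0(1) iv(1)] by blast
  define r0 where "r0 = i0 - a"
  define rv where "rv = iv - a"
  have r0: "r0 \<le> L" "i0 = a + r0" and rv: "rv \<le> L" "iv = a + rv"
    using aL by (simp_all add: r0_def rv_def)
  have M: "Mset k v t (set ps) = (\<lambda>r. ps ! (a + r)) ` {..L}"
    unfolding Mset_induced_path[OF ps i0(1) iv(1) i0(2) iv(2)] image_atLeastAtMost_shift[symmetric]
    using interval aL(1) by (intro image_cong) auto
  have "\<forall>r\<le>L. ps ! (a + r) \<in> set qs"
    using ext unfolding consistent_ext_def M by auto
  then obtain qs' c where qs': "induced_path k qs'" "set qs' = set qs"
    and seg: "\<forall>r\<le>L. c + r < length qs' \<and> qs' ! (c + r) = ps ! (a + r)"
    using induced_path_contains_segment[OF ps qs aL(1)] by blast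
  have closed: "\<forall>r\<le>L. \<forall>u\<in>set qs'. adj k (ps ! (a + r)) u \<longrightarrow> u \<in> set ps"
    using consistent_ext_adj_closed[OF ext] qs'(2) unfolding M by blast
  have "Mset k v t (set qs') = (\<lambda>m. qs' ! m) ` {m. m < length qs' \<and> detour (c + r0) (c + rv) m \<le> t}"
    using seg r0 rv i0(2) iv(2) by (intro Mset_induced_path[OF qs'(1)]) auto
  also have "\<dots> = (\<lambda>m. qs' ! m) ` {c..c + L}"
    using embedded_segment_detour_le_iff[OF ps qs'(1) aL(1) seg r0(1) rv(1) _ closed]
      interval r0(2) rv(2) seg by (intro image_cong) auto
  also have "\<dots> = (\<lambda>r. ps ! (a + r)) ` {..L}"
    unfolding image_atLeastAtMost_shift using seg by simp
  finally show ?thesis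
    using M qs'(2) by simp
qed

lemma dC_self: "v \<in> C \<Longrightarrow> dC k C v v = 0"
  unfolding dC_def walk_in_def by (intro Least_eq_0) (auto intro!: exI[of _ "[v]"])

lemma ai_eq_AI:
  "dC k C (origin k) v \<le> t \<Longrightarrow> ai k v t C = AI t v ((\<lambda>w. (w, bc k C w)) ` Mset k v t C)"
  unfolding ai_def Mset_def by auto

lemma graph_image_eq_iff:
  "(\<lambda>x. (x, f x)) ` A = (\<lambda>x. (x, g x)) ` B \<longleftrightarrow> A = B \<and> (\<forall>x\<in>A. f x = g x)"
proof
  assume graphs: "(\<lambda>x. (x, f x)) ` A = (\<lambda>x. (x, g x)) ` B"
  then have "fst ` (\<lambda>x. (x, f x)) ` A = fst ` (\<lambda>x. (x, g x)) ` B"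
    by simp
  then have "A = B"
    by (simp add: image_image)
  moreover have "f x = g x" if "x \<in> A" for x
  proof -
    have "(x, f x) \<in> (\<lambda>x. (x, g x)) ` B"
      using graphs that by blast
    then show ?thesis
      by auto
  qed
  ultimately show "A = B \<and> (\<forall>x\<in>A. f x = g x)"
    by blast
next
  assume "A = B \<and> (\<forall>x\<in>A. f x = g x)"
  then show "(\<lambda>x. (x, f x)) ` A = (\<lambda>x. (x, g x)) ` B"
    by (auto intro: image_cong)
qed

theorem theorem3:
  fixes k t :: nat and C C' :: "int list set" and v :: "int list"
  assumes "k \<in> {2, 3}"
    and "gconfig k C" and "gconfig k C'"
    and "v \<in> C"
    and "dC k C (origin k) v \<le> t"
  shows "equiv' k t v C C' \<longleftrightarrow> consistent_ext k (Mset k v t C) C C'"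
proof
  assume "equiv' k t v C C'"
  then have ai: "ai k v t C' = ai k v t C" "ai k v t C' \<noteq> Q"
    unfolding equiv'_def by auto
  then have "dC k C' (origin k) v \<le> t"
    by (auto simp: ai_def split: if_splits)
  then have "Mset k v t C' = Mset k v t C" "\<forall>w\<in>Mset k v t C'. bc k C' w = bc k C w"
    using ai(1) assms(5) by (simp_all add: ai_eq_AI graph_image_eq_iff)
  moreover have "Mset k v t C' \<subseteq> C'"
    by (auto simp: Mset_def)
  ultimately show "consistent_ext k (Mset k v t C) C C'"
    unfolding consistent_ext_def by simp
next
  assume ext: "consistent_ext k (Mset k v t C) C C'"
  obtain ps where ps: "induced_path k ps" "origin k \<in> set ps" "C = set ps"
    using gconfig_imp_induced_path[OF assms(2)] by blast
  obtain qs where qs: "induced_path k qs" "C' = set qs"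
    using gconfig_imp_induced_path[OF assms(3)] by blast
  have M: "Mset k v t C' = Mset k v t C"
    using Mset_eq_if_consistent_ext[OF ps(1) qs(1) ps(2)] assms(4,5) ext unfolding ps(3) qs(2) .
  have "v \<in> Mset k v t C"
    unfolding Mset_def using assms(4,5) dC_self by simp
  then have "v \<in> Mset k v t C'"
    using M by simp
  then have "v \<in> C'" "dC k C' (origin k) v \<le> t"
    unfolding Mset_def by auto
  then show "equiv' k t v C C'"
    using ext assms(4,5) unfolding equiv'_def consistent_ext_def
    by (simp add: ai_eq_AI M graph_image_eq_iff)
qed

end
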